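(* Assume $0<q_{00}$ and that $M=V\Lambda V^{-1}$ with $\Lambda=\mathrm{diag}(\lambda_0,\dots,\lambda_r)$, all $\lambda_x\neq 0$, $\lambda_r=1$ and column $r$ of $V$ equal to $e_r$. Define $\alpha^0_x=\frac{\lambda_x}{q_{00}}V_{0x}(V^{-1})_{x0}$ for $x\in\mathcal S$, and, if $\nu_0<1$, $\nu'=\frac{1}{1-\nu_0}(0,\nu_1,\dots,\nu_r)^{\mathrm T}$ and $\alpha^1_x=\frac{\lambda_x}{q_{00}}V_{0x}\sum_{z\in\mathcal S}(V^{-1})_{xz}\nu'_z$. Then $\alpha^0_r=\alpha^1_r=0$ and $$\sum_{x\in\mathcal S}\alpha^0_x=1,\qquad \sum_{x\in\mathcal S}\frac{\alpha^0_x}{\lambda_x}=\frac1{q_{00}},\qquad 0\le q_{00}\sum_{x\in\mathcal S}\alpha^1_x\le 1,\qquad \sum_{x\in\mathcal S}\frac{\alpha^1_x}{\lambda_x}=0.$$ Moreover $\alpha_x=\nu_0\alpha^0_x+(1-\nu_0)\alpha^1_x$, where $\alpha_x=V_{0x}\frac{\lambda_x}{q_{00}}\sum_z(V^{-1})_{xz}\nu_z$.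
   Context: Fix $r\ge1$ and $\mathcal S=\{0,1,\dots,r\}$. Let $q_{xz}\in[0,1]$ for $x\in\mathcal S$, $z\in\{0,\dots,r-1\}$, with $\sum_x q_{xz}=1$ for each such $z$. Define column-stochastic matrices $M^{\ell}$, $M^{s}$ indexed by $\mathcal S$: column $0$ of $M^\ell$ is $e_0$, column $r$ of $M^\ell$ is $e_r$, $M^\ell_{xz}=q_{xz}$ for $1\le z\le r-1$; column $0$ of $M^s$ is $(q_{00},\dots,q_{r0})^{\mathrm T}$ and $M^s_{xz}=\delta_{xz}$ for $z\ge1$. Set $M=M^sM^\ell$. $\nu=(\nu_0,\dots,\nu_r)$ is a probability vector on $\mathcal S$; $e_x$ denotes the $x$-th standard basis vector. *)

theory Defs
  imports Complex_Main
begin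

text \<open>Matrices indexed by S = {0..r} are represented as functions nat => nat => real;
only entries with indices in {0..r} are meaningful.\<close>

definition matmul :: "nat \<Rightarrow> (nat \<Rightarrow> nat \<Rightarrow> real) \<Rightarrow> (nat \<Rightarrow> nat \<Rightarrow> real) \<Rightarrow> nat \<Rightarrow> nat \<Rightarrow> real" where
  "matmul r A B i j = (\<Sum>k\<le>r. A i k * B k j)"

definition Ml :: "nat \<Rightarrow> (nat \<Rightarrow> nat \<Rightarrow> real) \<Rightarrow> nat \<Rightarrow> nat \<Rightarrow> real" where
  "Ml r q x z = (if z = 0 then (if x = 0 then 1 else 0)
                 else if z = r then (if x = r then 1 else 0)
                 else q x z)"

definition Ms :: "(nat \<Rightarrow> nat \<Rightarrow> real) \<Rightarrow> nat \<Rightarrow> nat \<Rightarrow> real" where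
  "Ms q x z = (if z = 0 then q x 0 else (if x = z then 1 else 0))"

definition Mmat :: "nat \<Rightarrow> (nat \<Rightarrow> nat \<Rightarrow> real) \<Rightarrow> nat \<Rightarrow> nat \<Rightarrow> real" where
  "Mmat r q = matmul r (Ms q) (Ml r q)"

text \<open>alpha^0_x = lambda_x / q00 * V_{0x} * (V^{-1})_{x0}; W denotes V^{-1}.\<close>
definition alpha0 :: "(nat \<Rightarrow> nat \<Rightarrow> real) \<Rightarrow> (nat \<Rightarrow> nat \<Rightarrow> real) \<Rightarrow> (nat \<Rightarrow> nat \<Rightarrow> real) \<Rightarrow> (nat \<Rightarrow> real) \<Rightarrow> nat \<Rightarrow> real" where
  "alpha0 q V W lam x = lam x / q 0 0 * V 0 x * W x 0"

definition nuprime :: "(nat \<Rightarrow> real) \<Rightarrow> nat \<Rightarrow> real" where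
  "nuprime nu z = (if z = 0 then 0 else nu z / (1 - nu 0))"

definition alpha1 :: "nat \<Rightarrow> (nat \<Rightarrow> nat \<Rightarrow> real) \<Rightarrow> (nat \<Rightarrow> nat \<Rightarrow> real) \<Rightarrow> (nat \<Rightarrow> nat \<Rightarrow> real) \<Rightarrow> (nat \<Rightarrow> real) \<Rightarrow> (nat \<Rightarrow> real) \<Rightarrow> nat \<Rightarrow> real" where
  "alpha1 r q V W lam nu x = lam x / q 0 0 * V 0 x * (\<Sum>z\<le>r. W x z * nuprime nu z)"

definition alpha :: "nat \<Rightarrow> (nat \<Rightarrow> nat \<Rightarrow> real) \<Rightarrow> (nat \<Rightarrow> nat \<Rightarrow> real) \<Rightarrow> (nat \<Rightarrow> nat \<Rightarrow> real) \<Rightarrow> (nat \<Rightarrow> real) \<Rightarrow> (nat \<Rightarrow> real) \<Rightarrow> nat \<Rightarrow> real" where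
  "alpha r q V W lam nu x = V 0 x * (lam x / q 0 0) * (\<Sum>z\<le>r. W x z * nu z)"

end

theory Submission
  imports Defs
begin

text \<open>All three vectors are values of one linear map: for a weight vector \<open>\<mu>\<close> put
  \<open>\<alpha>(\<mu>)\<^sub>x = V\<^sub>0\<^sub>x (\<lambda>\<^sub>x / q\<^sub>0\<^sub>0) (V\<^sup>-\<^sup>1\<mu>)\<^sub>x\<close>; then \<open>\<alpha>\<^sup>0 = \<alpha>(e\<^sub>0)\<close>, \<open>\<alpha>\<^sup>1 = \<alpha>(\<nu>')\<close>, and
  \<open>\<nu> = \<nu>\<^sub>0 e\<^sub>0 + (1 - \<nu>\<^sub>0) \<nu>'\<close> gives the decomposition of \<open>\<alpha>(\<nu>)\<close>. Summing \<open>\<alpha>(\<mu>)\<close> over \<open>x\<close>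
  yields \<open>(V\<Lambda>V\<^sup>-\<^sup>1\<mu>)\<^sub>0 / q\<^sub>0\<^sub>0 = (M\<mu>)\<^sub>0 / q\<^sub>0\<^sub>0\<close>; row 0 of \<open>M\<^sup>s\<close> is \<open>q\<^sub>0\<^sub>0 e\<^sub>0\<^sup>T\<close>, so this is row 0 of
  \<open>M\<^sup>\<ell>\<close> applied to \<open>\<mu>\<close>, whose entries lie in \<open>[0,1]\<close> with first entry 1. Summing
  \<open>\<alpha>(\<mu>)\<^sub>x / \<lambda>\<^sub>x\<close> instead cancels \<open>\<Lambda>\<close> and yields \<open>(VV\<^sup>-\<^sup>1\<mu>)\<^sub>0 / q\<^sub>0\<^sub>0 = \<mu>\<^sub>0 / q\<^sub>0\<^sub>0\<close>.\<close>

lemma Mmat_row0: "Mmat r q 0 z = q 0 0 * Ml r q 0 z"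
proof -
  have "Mmat r q 0 z = (\<Sum>k\<le>r. if k = 0 then q 0 0 * Ml r q 0 z else 0)"
    unfolding Mmat_def matmul_def by (rule sum.cong) (auto simp: Ms_def)
  then show ?thesis by simp
qed

lemma Ml_row0_bounds:
  assumes "\<And>z. z < r \<Longrightarrow> 0 \<le> q 0 z \<and> q 0 z \<le> 1" and "z \<le> r"
  shows "0 \<le> Ml r q 0 z \<and> Ml r q 0 z \<le> 1"
  using assms by (auto simp: Ml_def)

lemma alpha0_eq_alpha: "alpha0 q V W lam x = alpha r q V W lam (\<lambda>z. if z = 0 then 1 else 0) x"
  by (simp add: alpha0_def alpha_def if_distrib[of "(*) _"] sum.delta cong: if_cong)

lemma alpha1_eq_alpha: "alpha1 r q V W lam nu x = alpha r q V W lam (nuprime nu) x"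
  by (simp add: alpha1_def alpha_def mult_ac)

lemma alpha_linear:
  "alpha r q V W lam (\<lambda>z. a * mu z + b * mu' z) x
     = a * alpha r q V W lam mu x + b * alpha r q V W lam mu' x"
  by (simp add: alpha_def sum.distrib sum_distrib_left sum_divide_distrib algebra_simps)

lemma alpha_eq_convex_comb:
  assumes "nu 0 \<noteq> 1"
  shows "alpha r q V W lam nu x = nu 0 * alpha0 q V W lam x + (1 - nu 0) * alpha1 r q V W lam nu x"
proof -
  have "(\<lambda>z. nu 0 * (if z = 0 then 1 else 0) + (1 - nu 0) * nuprime nu z) = nu"
    using assms by (auto simp: nuprime_def)
  then have "alpha r q V W lam nu x
      = alpha r q V W lam (\<lambda>z. nu 0 * (if z = 0 then 1 else 0) + (1 - nu 0) * nuprime nu z) x"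
    by simp
  then show ?thesis
    by (simp only: alpha_linear alpha0_eq_alpha[of _ _ _ _ _ r] alpha1_eq_alpha)
qed

lemma nuprime_nonneg:
  assumes "0 \<le> nu z" and "nu 0 < 1"
  shows "0 \<le> nuprime nu z"
  using assms by (simp add: nuprime_def)

lemma sum_nuprime:
  assumes "(\<Sum>x\<le>r. nu x) = 1" and "nu 0 \<noteq> 1"
  shows "(\<Sum>z\<le>r. nuprime nu z) = 1"
proof -
  have "(\<Sum>z\<le>r. nuprime nu z) = (\<Sum>z\<le>r. (nu z - (if z = 0 then nu 0 else 0)) / (1 - nu 0))"
    by (rule sum.cong) (auto simp: nuprime_def)
  also have "\<dots> = ((\<Sum>z\<le>r. nu z) - nu 0) / (1 - nu 0)"
    by (simp add: sum_divide_distrib[symmetric] sum_subtractf)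
  finally show ?thesis using assms by simp
qed

lemma alpha_last:
  assumes "V 0 r = 0"
  shows "alpha r q V W lam mu r = 0"
  using assms by (simp add: alpha_def)

lemma sum_alpha:
  assumes diag: "\<And>z. z \<le> r \<Longrightarrow> Mmat r q 0 z = (\<Sum>y\<le>r. V 0 y * lam y * W y z)"
    and q00: "q 0 0 \<noteq> 0"
  shows "(\<Sum>x\<le>r. alpha r q V W lam mu x) = (\<Sum>z\<le>r. Ml r q 0 z * mu z)"
proof -
  have "q 0 0 * (\<Sum>x\<le>r. alpha r q V W lam mu x)
      = (\<Sum>x\<le>r. \<Sum>z\<le>r. V 0 x * lam x * W x z * mu z)"
    using q00 by (simp add: alpha_def sum_distrib_left sum_divide_distrib mult_ac)
  also have "\<dots> = (\<Sum>z\<le>r. Mmat r q 0 z * mu z)"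
    by (subst sum.swap) (simp add: diag sum_distrib_right)
  also have "\<dots> = q 0 0 * (\<Sum>z\<le>r. Ml r q 0 z * mu z)"
    by (simp add: Mmat_row0 sum_distrib_left mult_ac)
  finally show ?thesis using q00 by simp
qed

lemma sum_alpha_div_lam:
  assumes VW_row0: "\<And>z. z \<le> r \<Longrightarrow> matmul r V W 0 z = (if z = 0 then 1 else 0)"
    and lam_nz: "\<And>x. x \<le> r \<Longrightarrow> lam x \<noteq> 0"
  shows "(\<Sum>x\<le>r. alpha r q V W lam mu x / lam x) = mu 0 / q 0 0"
proof -
  have "(\<Sum>x\<le>r. alpha r q V W lam mu x / lam x)
      = (\<Sum>x\<le>r. \<Sum>z\<le>r. V 0 x * W x z * mu z / q 0 0)"
    by (intro sum.cong refl) (simp add: alpha_def lam_nz sum_distrib_left sum_divide_distrib mult_ac)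
  also have "\<dots> = (\<Sum>z\<le>r. matmul r V W 0 z * mu z / q 0 0)"
    by (subst sum.swap) (simp add: matmul_def sum_distrib_right sum_divide_distrib)
  also have "\<dots> = mu 0 / q 0 0"
    by (simp add: VW_row0 if_distrib[of "\<lambda>t. t * _ / _"] cong: if_cong)
  finally show ?thesis .
qed

lemma sum_mult_prob_bounds:
  fixes c p :: "nat \<Rightarrow> real"
  assumes "\<And>z. z \<le> r \<Longrightarrow> 0 \<le> c z \<and> c z \<le> 1"
    and "\<And>z. z \<le> r \<Longrightarrow> 0 \<le> p z" and "(\<Sum>z\<le>r. p z) = 1"
  shows "0 \<le> (\<Sum>z\<le>r. c z * p z) \<and> (\<Sum>z\<le>r. c z * p z) \<le> 1"
proof
  show "0 \<le> (\<Sum>z\<le>r. c z * p z)" using assms by (intro sum_nonneg) auto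
  have "(\<Sum>z\<le>r. c z * p z) \<le> (\<Sum>z\<le>r. p z)"
    using assms by (intro sum_mono) (simp add: mult_left_le_one_le)
  with assms(3) show "(\<Sum>z\<le>r. c z * p z) \<le> 1" by simp
qed

lemma sum_alpha0:
  assumes "\<And>z. z \<le> r \<Longrightarrow> Mmat r q 0 z = (\<Sum>y\<le>r. V 0 y * lam y * W y z)"
    and "q 0 0 \<noteq> 0"
  shows "(\<Sum>x\<le>r. alpha0 q V W lam x) = 1"
proof -
  have "(\<Sum>x\<le>r. alpha0 q V W lam x) = (\<Sum>z\<le>r. Ml r q 0 z * (if z = 0 then 1 else 0))"
    unfolding alpha0_eq_alpha[of _ _ _ _ _ r] using assms by (rule sum_alpha)
  also have "\<dots> = (\<Sum>z\<le>r. if z = 0 then Ml r q 0 0 else 0)"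
    by (intro sum.cong) auto
  finally show ?thesis by (simp add: Ml_def)
qed

lemma sum_alpha1_bounds:
  assumes "\<And>z. z \<le> r \<Longrightarrow> Mmat r q 0 z = (\<Sum>y\<le>r. V 0 y * lam y * W y z)"
    and "q 0 0 \<noteq> 0" and "\<And>z. z < r \<Longrightarrow> 0 \<le> q 0 z \<and> q 0 z \<le> 1"
    and "\<And>x. x \<le> r \<Longrightarrow> 0 \<le> nu x" and "(\<Sum>x\<le>r. nu x) = 1" and "nu 0 < 1"
  shows "0 \<le> (\<Sum>x\<le>r. alpha1 r q V W lam nu x) \<and> (\<Sum>x\<le>r. alpha1 r q V W lam nu x) \<le> 1"
  using sum_mult_prob_bounds[OF Ml_row0_bounds nuprime_nonneg sum_nuprime] assms
  by (simp add: alpha1_eq_alpha sum_alpha)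

theorem mainTheorem4:
  fixes r :: nat and q V W :: "nat \<Rightarrow> nat \<Rightarrow> real" and lam nu :: "nat \<Rightarrow> real"
  assumes r: "r \<ge> 1"
    and q_range: "\<And>x z. x \<le> r \<Longrightarrow> z < r \<Longrightarrow> 0 \<le> q x z \<and> q x z \<le> 1"
    and q_col: "\<And>z. z < r \<Longrightarrow> (\<Sum>x\<le>r. q x z) = 1"
    and nu_nonneg: "\<And>x. x \<le> r \<Longrightarrow> 0 \<le> nu x"
    and nu_sum: "(\<Sum>x\<le>r. nu x) = 1"
    and q00: "0 < q 0 0"
    and VW: "\<And>i j. i \<le> r \<Longrightarrow> j \<le> r \<Longrightarrow> matmul r V W i j = (if i = j then 1 else 0)"
    and WV: "\<And>i j. i \<le> r \<Longrightarrow> j \<le> r \<Longrightarrow> matmul r W V i j = (if i = j then 1 else 0)"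
    and diag: "\<And>i j. i \<le> r \<Longrightarrow> j \<le> r \<Longrightarrow>
                 Mmat r q i j = (\<Sum>y\<le>r. V i y * lam y * W y j)"
    and lam_nz: "\<And>x. x \<le> r \<Longrightarrow> lam x \<noteq> 0"
    and lam_r: "lam r = 1"
    and V_col_r: "\<And>x. x \<le> r \<Longrightarrow> V x r = (if x = r then 1 else 0)"
  shows "alpha0 q V W lam r = 0
       \<and> (\<Sum>x\<le>r. alpha0 q V W lam x) = 1
       \<and> (\<Sum>x\<le>r. alpha0 q V W lam x / lam x) = 1 / q 0 0
       \<and> (nu 0 < 1 \<longrightarrow>
            alpha1 r q V W lam nu r = 0
          \<and> 0 \<le> q 0 0 * (\<Sum>x\<le>r. alpha1 r q V W lam nu x)
          \<and> q 0 0 * (\<Sum>x\<le>r. alpha1 r q V W lam nu x) \<le> 1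
          \<and> (\<Sum>x\<le>r. alpha1 r q V W lam nu x / lam x) = 0
          \<and> (\<forall>x\<le>r. alpha r q V W lam nu x
                = nu 0 * alpha0 q V W lam x + (1 - nu 0) * alpha1 r q V W lam nu x))"
proof -
  have V0r: "V 0 r = 0" using V_col_r[of 0] r by simp
  have sum_div_lam: "(\<Sum>x\<le>r. alpha r q V W lam mu x / lam x) = mu 0 / q 0 0" for mu
    using VW[of 0] by (intro sum_alpha_div_lam lam_nz) auto
  have "alpha0 q V W lam r = 0" "nu 0 < 1 \<Longrightarrow> alpha1 r q V W lam nu r = 0"
    using alpha_last[of V r, OF V0r] by (simp_all only: alpha0_eq_alpha[of _ _ _ _ _ r] alpha1_eq_alpha)
  moreover have "(\<Sum>x\<le>r. alpha0 q V W lam x / lam x) = 1 / q 0 0"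
    "(\<Sum>x\<le>r. alpha1 r q V W lam nu x / lam x) = 0"
    using sum_div_lam by (simp_all add: alpha0_eq_alpha[of _ _ _ _ _ r] alpha1_eq_alpha nuprime_def)
  moreover have "(\<Sum>x\<le>r. alpha0 q V W lam x) = 1"
    using q00 by (intro sum_alpha0 diag) auto
  moreover have "nu 0 < 1 \<Longrightarrow> 0 \<le> (\<Sum>x\<le>r. alpha1 r q V W lam nu x)
                                \<and> (\<Sum>x\<le>r. alpha1 r q V W lam nu x) \<le> 1"
    using q00 q_range[of 0] nu_nonneg nu_sum by (intro sum_alpha1_bounds diag) auto
  moreover have "q 0 0 \<le> 1" using q_range[of 0 0] r by simp
  ultimately show ?thesis
    using q00 by (auto simp: alpha_eq_convex_comb mult_le_one)
qed

end
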